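(* Let $N\ge1$, let $\mathcal{L}_e$ be a finite index set of size $L_e$, for each $\ell\in\mathcal{L}_e$ let $\mathbf{a}_\ell\in\mathbb{R}^N$, $r_\ell>0$, $x_\ell>0$, and let $L$ be a positive integer. For $\mathbf{b}\in\mathbb{R}^{L_e}$ set $\mathbf{R}^{-1}(\mathbf{b})=\frac12\sum_{\ell}\frac{b_\ell}{r_\ell}\mathbf{a}_\ell\mathbf{a}_\ell^\top$, $\mathbf{X}^{-1}(\mathbf{b})=\frac12\sum_\ell\frac{b_\ell}{x_\ell}\mathbf{a}_\ell\mathbf{a}_\ell^\top$ and, when these are invertible, $$\boldsymbol{\Sigma}(\mathbf{b})=\mathbf{R}(\mathbf{b})\boldsymbol{\Sigma}_p\mathbf{R}(\mathbf{b})+\mathbf{X}(\mathbf{b})\boldsymbol{\Sigma}_q\mathbf{X}(\mathbf{b})+\mathbf{R}(\mathbf{b})\boldsymbol{\Sigma}_{pq}\mathbf{X}(\mathbf{b})+\mathbf{X}(\mathbf{b})\boldsymbol{\Sigma}_{pq}^\top\mathbf{R}(\mathbf{b})+\sigma_n^2\mathbf{I}_N,$$ where $\sigma_n^2\ge0$ and $\boldsymbol{\Sigma}_p,\boldsymbol{\Sigma}_q,\boldsymbol{\Sigma}_{pq}\in\mathbb{R}^{N\times N}$ are such that $\begin{bmatrix}\boldsymbol{\Sigma}_p&\boldsymbol{\Sigma}_{pq}\\ \boldsymbol{\Sigma}_{pq}^\top&\boldsymbol{\Sigma}_q\end{bmatrix}$ is symmetric positive semidefinite (a joint covariance matrix).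 Let $f(\mathbf{b})=\log|\boldsymbol{\Sigma}(\mathbf{b})|+\operatorname{trace}(\boldsymbol{\Sigma}^{-1}(\mathbf{b})\hat{\boldsymbol{\Sigma}})$, defined (finite) at those $\mathbf{b}$ for which $\mathbf{R}(\mathbf{b}),\mathbf{X}(\mathbf{b})$ exist and $\boldsymbol{\Sigma}(\mathbf{b})\succ0$. Let $\mathbf{b}_o\in\{0,1\}^{L_e}$ with $\mathbf{1}^\top\mathbf{b}_o=L$ be such that $f(\mathbf{b}_o)$ is defined (the true line indicator vector), and suppose $\hat{\boldsymbol{\Sigma}}=\boldsymbol{\Sigma}(\mathbf{b}_o)$. Then $\nabla f(\mathbf{b}_o)=\mathbf{0}$, and $\mathbf{b}_o$ is a global minimizer of $f$ both over $\{\mathbf{b}\in\{0,1\}^{L_e}:\mathbf{1}^\top\mathbf{b}=L\}$ and over $\{\mathbf{b}\in[0,1]^{L_e}:\mathbf{1}^\top\mathbf{b}=L\}$ (among the points where $f$ is defined).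
   Context: $|\cdot|$ is the determinant; $\mathbf{1}$ is the all-ones vector. $\mathbf{b}$ is the indicator vector of energized lines among the existing lines $\mathcal{L}_e$ of a distribution grid, $\mathbf{a}_\ell^\top$ are rows of its reduced incidence matrix, and $\hat{\boldsymbol{\Sigma}}$ plays the role of the sample covariance of differential squared-voltage magnitudes, here assumed to have converged to the ensemble covariance. *)

theory Defs
  imports "HOL-Analysis.Analysis"
begin

definition outer :: "real^'n \<Rightarrow> real^'n \<Rightarrow> real^'n^'n" where
  "outer u v = (\<chi> i j. u $ i * v $ j)"

definition mtrace :: "real^'n^'n \<Rightarrow> real" where
  "mtrace M = (\<Sum>i\<in>UNIV. M $ i $ i)"

definition sym_mat :: "real^'m^'m \<Rightarrow> bool" where
  "sym_mat M \<longleftrightarrow> transpose M = M"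

definition psd :: "real^'m^'m \<Rightarrow> bool" where
  "psd M \<longleftrightarrow> sym_mat M \<and> (\<forall>x. 0 \<le> x \<bullet> (M *v x))"

definition pd :: "real^'m^'m \<Rightarrow> bool" where
  "pd M \<longleftrightarrow> sym_mat M \<and> (\<forall>x. x \<noteq> 0 \<longrightarrow> 0 < x \<bullet> (M *v x))"

definition block2 :: "real^'n^'n \<Rightarrow> real^'n^'n \<Rightarrow> real^'n^'n \<Rightarrow> real^'n^'n
    \<Rightarrow> real^('n + 'n)^('n + 'n)" where
  "block2 A B C D = (\<chi> i j. case i of
      Inl i' \<Rightarrow> (case j of Inl j' \<Rightarrow> A $ i' $ j' | Inr j' \<Rightarrow> B $ i' $ j')
    | Inr i' \<Rightarrow> (case j of Inl j' \<Rightarrow> C $ i' $ j' | Inr j' \<Rightarrow> D $ i' $ j'))"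

text \<open>R^{-1}(b) (with c = r) and X^{-1}(b) (with c = x).\<close>
definition invmat :: "('e::finite \<Rightarrow> real^'n) \<Rightarrow> ('e \<Rightarrow> real) \<Rightarrow> real^'e \<Rightarrow> real^'n^'n" where
  "invmat a c b = (1/2) *\<^sub>R (\<Sum>l\<in>UNIV. (b $ l / c l) *\<^sub>R outer (a l) (a l))"

definition Sigma_b :: "('e::finite \<Rightarrow> real^'n) \<Rightarrow> ('e \<Rightarrow> real) \<Rightarrow> ('e \<Rightarrow> real)
    \<Rightarrow> real^'n^'n \<Rightarrow> real^'n^'n \<Rightarrow> real^'n^'n \<Rightarrow> real \<Rightarrow> real^'e \<Rightarrow> real^'n^'n" where
  "Sigma_b a r x Sp Sq Spq sn2 b =
     (let R = matrix_inv (invmat a r b); X = matrix_inv (invmat a x b) in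
       R ** Sp ** R + X ** Sq ** X + R ** Spq ** X + X ** transpose Spq ** R
       + sn2 *\<^sub>R mat 1)"

definition f_defined :: "('e::finite \<Rightarrow> real^'n) \<Rightarrow> ('e \<Rightarrow> real) \<Rightarrow> ('e \<Rightarrow> real)
    \<Rightarrow> real^'n^'n \<Rightarrow> real^'n^'n \<Rightarrow> real^'n^'n \<Rightarrow> real \<Rightarrow> real^'e \<Rightarrow> bool" where
  "f_defined a r x Sp Sq Spq sn2 b \<longleftrightarrow>
     invertible (invmat a r b) \<and> invertible (invmat a x b) \<and> pd (Sigma_b a r x Sp Sq Spq sn2 b)"

definition fobj :: "('e::finite \<Rightarrow> real^'n) \<Rightarrow> ('e \<Rightarrow> real) \<Rightarrow> ('e \<Rightarrow> real)
    \<Rightarrow> real^'n^'n \<Rightarrow> real^'n^'n \<Rightarrow> real^'n^'n \<Rightarrow> real \<Rightarrow> real^'n^'n \<Rightarrow> real^'e \<Rightarrow> real" where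
  "fobj a r x Sp Sq Spq sn2 Shat b =
     (let S = Sigma_b a r x Sp Sq Spq sn2 b in ln (det S) + mtrace (matrix_inv S ** Shat))"

end

theory Submission
  imports Defs
begin

text \<open>
  For positive definite \<open>S\<close> and \<open>S\<^sub>0\<close> one has
  \<open>ln det S\<^sub>0 + N \<le> ln det S + trace (S\<^sup>-\<^sup>1 S\<^sub>0)\<close>: this is the nonnegativity of the
  Kullback-Leibler divergence between two centred Gaussians. A unimodular congruence
  \<open>E\<close> diagonalises \<open>S\<close>; after it the inequality splits into Hadamard's inequality
  for \<open>E S\<^sub>0 E\<^sup>T\<close> and the scalar inequalities \<open>ln t \<le> t - 1\<close>. Hence the true
  indicator vector minimises \<open>f\<close> wherever \<open>f\<close> is defined, whatever constraints are
  imposed. Since \<open>f\<close> is defined on a neighbourhood of the true indicator vector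
  (positive definiteness is an open condition) and is differentiable there (by
  Cramer's rule the inverse is a rational function of the entries), it has a local
  minimum and hence a vanishing derivative there.
\<close>

lemma matrix_inv_right:
  fixes A :: "real^'n^'n"
  assumes "invertible A"
  shows "A ** matrix_inv A = mat 1"
  using someI_ex[OF assms[unfolded invertible_def]] unfolding matrix_inv_def by blast

lemma matrix_inv_left:
  fixes A :: "real^'n^'n"
  assumes "invertible A"
  shows "matrix_inv A ** A = mat 1"
  using someI_ex[OF assms[unfolded invertible_def]] unfolding matrix_inv_def by blast

lemma matrix_inv_unique_left:
  fixes A B :: "real^'n^'n"
  assumes "B ** A = mat 1"
  shows "matrix_inv A = B"
proof -
  have inv: "invertible A" using assms invertible_left_inverse by blast
  have "A ** B = mat 1" using assms matrix_left_right_inverse by blast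
  then have "matrix_inv A = matrix_inv A ** (A ** B)" by simp
  also have "\<dots> = B" using matrix_inv_left[OF inv] by (simp add: matrix_mul_assoc)
  finally show ?thesis .
qed

lemma mtrace_eq_trace: "mtrace A = trace A"
  by (simp add: mtrace_def trace_def)

lemma transpose_add: "transpose (A + B) = transpose A + transpose B"
  by (simp add: transpose_def vec_eq_iff)

lemma sym_mat_nth: "sym_mat M \<Longrightarrow> M $ i $ j = M $ j $ i"
  unfolding sym_mat_def by (metis transpose_def vec_lambda_beta)

lemma sym_mat_matrix_inv:
  fixes M :: "real^'n^'n"
  assumes "sym_mat M" "invertible M"
  shows "sym_mat (matrix_inv M)"
proof -
  have "transpose (matrix_inv M) ** M = mat 1"
    using matrix_inv_right[OF assms(2)] assms(1)
    by (metis matrix_transpose_mul sym_mat_def transpose_mat)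
  then have "matrix_inv M = transpose (matrix_inv M)" by (rule matrix_inv_unique_left)
  then show ?thesis by (simp add: sym_mat_def)
qed

lemma sym_mat_block2_diag:
  assumes "sym_mat (block2 A B C D)"
  shows "sym_mat A" "sym_mat D"
  unfolding sym_mat_def
  using sym_mat_nth[OF assms, of "Inl _" "Inl _"] sym_mat_nth[OF assms, of "Inr _" "Inr _"]
  by (simp_all add: vec_eq_iff transpose_def block2_def)

section \<open>Positive definite matrices\<close>

lemma quadratic_form_axis:
  fixes A :: "real^'n^'n"
  shows "axis i 1 \<bullet> (A *v axis i 1) = A $ i $ i"
  by (simp add: inner_vec_def matrix_vector_mult_def axis_def if_distrib if_distribR cong: if_cong)

lemma pd_diagonal_pos: "pd A \<Longrightarrow> 0 < A $ i $ i"
  unfolding pd_def using quadratic_form_axis[of i A] by (metis axis_eq_0_iff zero_neq_one)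

lemma pd_congruence:
  fixes B E :: "real^'n^'n"
  assumes "pd B" "det E \<noteq> 0"
  shows "pd (E ** B ** transpose E)"
  unfolding pd_def sym_mat_def
proof (intro conjI allI impI)
  show "transpose (E ** B ** transpose E) = E ** B ** transpose E"
    using assms(1) by (simp add: pd_def sym_mat_def matrix_transpose_mul matrix_mul_assoc)
  fix x :: "real^'n" assume "x \<noteq> 0"
  have "inj ((*v) (transpose E))"
    using assms(2) by (simp add: invertible_det_nz inj_matrix_vector_mult)
  then have y: "transpose E *v x \<noteq> 0" using \<open>x \<noteq> 0\<close>
    by (metis inj_eq matrix_vector_mult_0_right)
  have "x \<bullet> ((E ** B ** transpose E) *v x) = (transpose E *v x) \<bullet> (B *v (transpose E *v x))"
    by (simp add: matrix_vector_mul_assoc[symmetric] dot_lmul_matrix[symmetric])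
  then show "0 < x \<bullet> ((E ** B ** transpose E) *v x)" using assms(1) y unfolding pd_def by simp
qed

lemma if_times_real:
  "(if P then a else 0) * (y::real) = (if P then a * y else 0)"
  "(y::real) * (if P then a else 0) = (if P then y * a else 0)"
  by simp_all

text \<open>
  Symmetric Gaussian elimination with pivot \<open>k\<close>: subtracting \<open>B\<^sub>i\<^sub>k / B\<^sub>k\<^sub>k\<close> times
  row \<open>k\<close> from every other row \<open>i\<close> (and the same for columns) clears row and column \<open>k\<close>.
\<close>
definition elim_matrix :: "real^'n^'n \<Rightarrow> 'n \<Rightarrow> real^'n^'n" where
  "elim_matrix B k = (\<chi> i j. (if i = j then 1 else 0)
     - (if j = k then (if i = k then 0 else B$i$k / B$k$k) else 0))"

lemma det_elim_matrix:
  fixes B :: "real^'n^'n"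
  shows "det (elim_matrix B k) = 1"
proof -
  define c where "c i = (if i = k then 0 else B$i$k / B$k$k)" for i
  define I :: "real^'n^'n" where "I = mat 1"
  define v :: "real^'n" where "v = - (\<Sum>j\<in>UNIV. c j *s row j I)"
  have "c j *s row j I \<in> vec.span {row j I |j. j \<noteq> k}" for j
  proof (cases "j = k")
    case False
    then show ?thesis by (intro vec.span_scale vec.span_base) blast
  qed (simp add: c_def vec.span_zero)
  then have "v \<in> vec.span {row j I |j. j \<noteq> k}"
    unfolding v_def by (intro vec.span_neg vec.span_sum)
  from det_row_span[OF this]
  have "det (\<chi> i. if i = k then row k I + v else row i I) = 1"
    by (simp add: I_def)
  moreover have "v $ s = - c s" for s
    unfolding v_def by (simp add: row_def I_def mat_def if_times_real)
  then have "(\<chi> i. if i = k then row k I + v else row i I) = transpose (elim_matrix B k)"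
    by (simp add: vec_eq_iff transpose_def elim_matrix_def c_def row_def I_def mat_def)
  ultimately show ?thesis by simp
qed

lemma elim_matrix_congruence_nth:
  fixes B :: "real^'n^'n" and k :: 'n
  defines "c \<equiv> \<lambda>i. if i = k then 0 else B$i$k / B$k$k"
  shows "(elim_matrix B k ** B ** transpose (elim_matrix B k)) $ i $ j
     = B$i$j - c i * B$k$j - c j * B$i$k + c i * c j * B$k$k"
proof -
  have E: "elim_matrix B k $ i $ l = (if i = l then 1 else 0) - (if l = k then c i else 0)" for i l
    unfolding elim_matrix_def c_def by simp
  have EB: "(elim_matrix B k ** B) $ i $ l = B$i$l - c i * B$k$l" for i l
  proof -
    have "(elim_matrix B k ** B) $ i $ l
        = (\<Sum>m\<in>UNIV. (if i = m then B$m$l else 0)) - (\<Sum>m\<in>UNIV. (if m = k then c i * B$m$l else 0))"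
      by (simp add: matrix_matrix_mult_def E left_diff_distrib sum_subtractf if_times_real)
    then show ?thesis by simp
  qed
  have "(elim_matrix B k ** B ** transpose (elim_matrix B k)) $ i $ j
      = (\<Sum>l\<in>UNIV. (if j = l then B$i$l - c i * B$k$l else 0))
      - (\<Sum>l\<in>UNIV. (if l = k then (B$i$l - c i * B$k$l) * c j else 0))"
    by (simp add: matrix_matrix_mult_def[of "elim_matrix B k ** B"] transpose_def E EB
        right_diff_distrib sum_subtractf if_times_real)
  then show ?thesis by (simp add: algebra_simps)
qed

text \<open>
  Each elimination step keeps the rows and columns already cleared and only decreases
  diagonal entries, by \<open>B\<^sub>i\<^sub>k\<^sup>2 / B\<^sub>k\<^sub>k\<close>.
\<close>
lemma pd_diagonalize_on:
  fixes A :: "real^'n^'n"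
  assumes "pd A" and "finite K"
  shows "\<exists>E. det E = 1 \<and> pd (E ** A ** transpose E)
     \<and> (\<forall>i j. i \<noteq> j \<and> (i \<in> K \<or> j \<in> K) \<longrightarrow> (E ** A ** transpose E)$i$j = 0)
     \<and> (\<forall>i. (E ** A ** transpose E)$i$i \<le> A$i$i)"
  using assms(2)
proof (induction K rule: finite_induct)
  case empty
  show ?case by (rule exI[of _ "mat 1"]) (simp add: assms(1))
next
  case (insert k K)
  then obtain E where E: "det E = 1" "pd (E ** A ** transpose E)"
     "\<forall>i j. i \<noteq> j \<and> (i \<in> K \<or> j \<in> K) \<longrightarrow> (E ** A ** transpose E)$i$j = 0"
     "\<forall>i. (E ** A ** transpose E)$i$i \<le> A$i$i" by blast
  define B where "B = E ** A ** transpose E"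
  define E' where "E' = elim_matrix B k"
  define c where "c = (\<lambda>i. if i = k then 0 else B$i$k / B$k$k)"
  have pdB: "pd B" using E(2) B_def by simp
  have Bkk: "0 < B$k$k" using pd_diagonal_pos[OF pdB] .
  have Bsym: "B$i$j = B$j$i" for i j using pdB unfolding pd_def by (simp add: sym_mat_nth)
  have E'B: "(E' ** B ** transpose E') $ i $ j
     = B$i$j - c i * B$k$j - c j * B$i$k + c i * c j * B$k$k" for i j
    unfolding E'_def c_def by (rule elim_matrix_congruence_nth)
  have zeros: "(E' ** B ** transpose E') $ i $ j = 0"
    if ij: "i \<noteq> j" and mem: "i \<in> insert k K \<or> j \<in> insert k K" for i j
  proof -
    consider "i = k" | "j = k" | "i \<in> K" "i \<noteq> k" | "j \<in> K" "j \<noteq> k"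
      using mem insert.hyps by auto
    then show ?thesis
    proof cases
      case 1 then show ?thesis using ij Bkk by (simp add: E'B c_def Bsym[of j k])
    next
      case 2 then show ?thesis using ij Bkk by (simp add: E'B c_def)
    next
      case 3
      have "B$i$j = 0" "B$i$k = 0" using E(3) 3 ij by (auto simp: B_def)
      then show ?thesis using 3 by (simp add: E'B c_def Bsym[of k i])
    next
      case 4
      have "B$i$j = 0" "B$j$k = 0" using E(3) 4 ij by (auto simp: B_def)
      then show ?thesis using 4 by (simp add: E'B c_def Bsym[of k j])
    qed
  qed
  have diag: "(E' ** B ** transpose E') $ i $ i \<le> A$i$i" for i
  proof -
    have "(E' ** B ** transpose E') $ i $ i \<le> B$i$i"
    proof (cases "i = k")
      case False
      then have "(E' ** B ** transpose E') $ i $ i = B$i$i - (B$i$k)^2 / B$k$k"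
        using Bkk by (simp add: E'B c_def Bsym[of k i] power2_eq_square field_simps)
      then show ?thesis using Bkk by simp
    qed (simp add: E'B c_def)
    then show ?thesis using E(4) B_def by (metis order_trans)
  qed
  have "det (E' ** E) = 1" by (simp add: det_mul E(1) E'_def det_elim_matrix)
  moreover have "pd (E' ** B ** transpose E')"
    using pd_congruence[OF pdB, of E'] by (simp add: E'_def det_elim_matrix)
  moreover have "E' ** B ** transpose E' = (E' ** E) ** A ** transpose (E' ** E)"
    by (simp add: B_def matrix_transpose_mul matrix_mul_assoc)
  ultimately show ?case using zeros diag by (intro exI[of _ "E' ** E"]) simp
qed

lemma pd_diagonalize:
  fixes A :: "real^'n^'n"
  assumes "pd A"
  obtains E where "det E = 1" "pd (E ** A ** transpose E)"
    "\<And>i j. i \<noteq> j \<Longrightarrow> (E ** A ** transpose E)$i$j = 0"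
    "\<And>i. (E ** A ** transpose E)$i$i \<le> A$i$i"
  using pd_diagonalize_on[OF assms, of UNIV] by auto

lemma pd_det_eq_prod_diagonal:
  fixes A :: "real^'n^'n"
  assumes "pd A"
  obtains d where "\<And>i. 0 < d i" "\<And>i. d i \<le> A$i$i" "det A = (\<Prod>i\<in>UNIV. d i)"
proof -
  obtain E where E: "det E = 1" "pd (E ** A ** transpose E)"
    "\<And>i j. i \<noteq> j \<Longrightarrow> (E ** A ** transpose E)$i$j = 0"
    "\<And>i. (E ** A ** transpose E)$i$i \<le> A$i$i"
    using pd_diagonalize[OF assms] by blast
  have "det A = det (E ** A ** transpose E)" using E(1) by (simp add: det_mul)
  also have "\<dots> = (\<Prod>i\<in>UNIV. (E ** A ** transpose E)$i$i)" using E(3) by (intro det_diagonal) auto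
  finally show ?thesis by (rule that[OF pd_diagonal_pos[OF E(2)] E(4)])
qed

lemma pd_det_pos: "pd A \<Longrightarrow> 0 < det A"
  by (metis pd_det_eq_prod_diagonal prod_pos)

lemma hadamard_inequality_pd:
  assumes "pd A"
  shows "det A \<le> (\<Prod>i\<in>UNIV. A$i$i)"
proof -
  obtain d where "\<And>i. 0 < d i" "\<And>i. d i \<le> A$i$i" "det A = (\<Prod>i\<in>UNIV. d i)"
    using pd_det_eq_prod_diagonal[OF assms] by blast
  then show ?thesis by (simp add: prod_mono less_imp_le)
qed

lemma matrix_inv_mult:
  fixes A B :: "real^'n^'n"
  assumes "invertible A" "invertible B"
  shows "matrix_inv (A ** B) = matrix_inv B ** matrix_inv A"
proof (rule matrix_inv_unique_left)
  have "matrix_inv B ** matrix_inv A ** (A ** B) = matrix_inv B ** (matrix_inv A ** A) ** B"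
    by (simp add: matrix_mul_assoc)
  then show "matrix_inv B ** matrix_inv A ** (A ** B) = mat 1"
    using assms by (simp add: matrix_inv_left)
qed

lemma trace_matrix_inv_congruence:
  fixes E S S0 :: "real^'n^'n"
  assumes "invertible E" "invertible S"
  shows "trace (matrix_inv (E ** S ** transpose E) ** (E ** S0 ** transpose E))
    = trace (matrix_inv S ** S0)"
proof -
  have Et: "invertible (transpose E)" using assms(1) by (simp add: transpose_invertible)
  have "matrix_inv (E ** S ** transpose E) = matrix_inv (transpose E) ** matrix_inv S ** matrix_inv E"
    using assms Et by (simp add: matrix_inv_mult invertible_mult matrix_mul_assoc)
  then have "trace (matrix_inv (E ** S ** transpose E) ** (E ** S0 ** transpose E))
      = trace (matrix_inv (transpose E) ** (matrix_inv S ** ((matrix_inv E ** E) ** S0 ** transpose E)))"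
    by (simp add: matrix_mul_assoc)
  also have "\<dots> = trace (matrix_inv (transpose E) ** (matrix_inv S ** S0 ** transpose E))"
    unfolding matrix_inv_left[OF assms(1)] matrix_mul_lid by (simp add: matrix_mul_assoc)
  also have "\<dots> = trace ((matrix_inv S ** S0 ** transpose E) ** matrix_inv (transpose E))"
    by (rule trace_mul_sym)
  also have "\<dots> = trace (matrix_inv S ** S0)"
    by (simp add: matrix_inv_right[OF Et] flip: matrix_mul_assoc)
  finally show ?thesis .
qed

lemma matrix_inv_diagonal:
  fixes D :: "real^'n^'n"
  assumes "\<And>i j. i \<noteq> j \<Longrightarrow> D$i$j = 0" "\<And>i. D$i$i \<noteq> 0"
  shows "matrix_inv D = (\<chi> i j. if i = j then 1 / D$i$i else 0)"
proof (rule matrix_inv_unique_left)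
  have "((\<chi> i j. if i = j then 1 / D$i$i else 0) ** D) $ i $ j = mat 1 $ i $ j" for i j
    using assms(1)[of i j] assms(2)[of i]
    by (cases "i = j") (simp_all add: matrix_matrix_mult_def if_times_real mat_def)
  then show "(\<chi> i j. if i = j then 1 / D$i$i else 0) ** D = mat 1" by (simp add: vec_eq_iff)
qed

lemma ln_det_trace_inequality_diagonal:
  fixes D C :: "real^'n^'n"
  assumes diagonal: "\<And>i j. i \<noteq> j \<Longrightarrow> D$i$j = 0" and "pd D" "pd C"
  shows "ln (det C) + real CARD('n) \<le> ln (det D) + trace (matrix_inv D ** C)"
proof -
  have Dpos: "0 < D$i$i" and Cpos: "0 < C$i$i" for i
    using pd_diagonal_pos assms(2,3) by blast+
  have detD: "det D = (\<Prod>i\<in>UNIV. D$i$i)" using diagonal by (intro det_diagonal) auto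
  have "D$i$i \<noteq> 0" for i using Dpos[of i] by simp
  then have trace_eq: "trace (matrix_inv D ** C) = (\<Sum>i\<in>UNIV. C$i$i / D$i$i)"
    by (simp add: matrix_inv_diagonal[OF diagonal] trace_def matrix_matrix_mult_def if_times_real)
  have "ln (det C) \<le> ln (\<Prod>i\<in>UNIV. C$i$i)"
    using hadamard_inequality_pd[OF assms(3)] pd_det_pos[OF assms(3)] by simp
  also have "\<dots> = (\<Sum>i\<in>UNIV. ln (C$i$i))"
    using Cpos by (subst ln_prod) (auto simp: less_imp_neq[symmetric])
  finally have "ln (det C) + real CARD('n) \<le> (\<Sum>i\<in>UNIV. ln (C$i$i) + 1)"
    by (simp add: sum.distrib)
  also have "\<dots> \<le> (\<Sum>i\<in>UNIV. ln (D$i$i) + C$i$i / D$i$i)"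
  proof (rule sum_mono)
    fix i
    have "ln (C$i$i / D$i$i) \<le> C$i$i / D$i$i - 1"
      using Cpos[of i] Dpos[of i] by (intro ln_le_minus_one) simp
    then show "ln (C$i$i) + 1 \<le> ln (D$i$i) + C$i$i / D$i$i"
      using Cpos[of i] Dpos[of i] by (simp add: ln_div)
  qed
  also have "\<dots> = ln (det D) + trace (matrix_inv D ** C)"
    unfolding detD trace_eq using Dpos
    by (subst ln_prod) (auto simp: sum.distrib less_imp_neq[symmetric])
  finally show ?thesis .
qed

lemma ln_det_trace_inequality:
  fixes S S0 :: "real^'n^'n"
  assumes "pd S" "pd S0"
  shows "ln (det S0) + real CARD('n) \<le> ln (det S) + trace (matrix_inv S ** S0)"
proof -
  obtain E where E: "det E = 1" "pd (E ** S ** transpose E)"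
     "\<And>i j. i \<noteq> j \<Longrightarrow> (E ** S ** transpose E)$i$j = 0"
    by (rule pd_diagonalize[OF assms(1)]) simp
  have "pd (E ** S0 ** transpose E)" using pd_congruence[OF assms(2)] E(1) by simp
  from ln_det_trace_inequality_diagonal[OF E(3) E(2) this]
  show ?thesis
    using E(1) pd_det_pos[OF assms(1)]
    by (simp add: det_mul trace_matrix_inv_congruence invertible_det_nz)
qed

lemma quadratic_form_eq_sum:
  fixes A :: "real^'n^'n"
  shows "x \<bullet> (A *v x) = (\<Sum>i\<in>UNIV. \<Sum>j\<in>UNIV. x$i * A$i$j * x$j)"
  unfolding inner_vec_def matrix_vector_mult_def
  by (auto simp: sum_distrib_left ac_simps intro!: sum.cong)

lemma abs_quadratic_form_le:
  fixes D :: "real^'n^'n"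
  assumes "\<And>i j. \<bar>D$i$j\<bar> \<le> e"
  shows "\<bar>x \<bullet> (D *v x)\<bar> \<le> real CARD('n) ^ 2 * e * (norm x)^2"
proof -
  have "\<bar>x$i * D$i$j * x$j\<bar> \<le> norm x * e * norm x" for i j
  proof -
    have "\<bar>x$i * D$i$j * x$j\<bar> = \<bar>x$i\<bar> * \<bar>D$i$j\<bar> * \<bar>x$j\<bar>" by (simp add: abs_mult)
    also have "\<dots> \<le> norm x * e * norm x"
      using assms[of i j] component_le_norm_cart[of x i] component_le_norm_cart[of x j]
      by (intro mult_mono) auto
    finally show ?thesis .
  qed
  then have "\<bar>x \<bullet> (D *v x)\<bar> \<le> (\<Sum>i\<in>(UNIV::'n set). \<Sum>j\<in>(UNIV::'n set). norm x * e * norm x)"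
    unfolding quadratic_form_eq_sum
    by (intro order_trans[OF sum_abs sum_mono] order_trans[OF sum_abs sum_mono])
  also have "\<dots> = real CARD('n) ^ 2 * e * (norm x)^2" by (simp add: power2_eq_square)
  finally show ?thesis .
qed

lemma pd_quadratic_form_lower_bound:
  fixes S :: "real^'n^'n"
  assumes "pd S"
  obtains c where "0 < c" "\<And>x. c * (norm x)^2 \<le> x \<bullet> (S *v x)"
proof -
  let ?q = "\<lambda>x::real^'n. x \<bullet> (S *v x)"
  have "continuous_on (sphere 0 1) ?q"
    by (intro continuous_intros linear_continuous_on matrix_vector_mul_linear)
  moreover have "sphere (0::real^'n) 1 \<noteq> {}"
    using norm_axis_1[of undefined] by force
  ultimately obtain u where u: "u \<in> sphere 0 1" "\<forall>y \<in> sphere 0 1. ?q u \<le> ?q y"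
    using continuous_attains_inf[OF compact_sphere] by blast
  have "u \<noteq> 0" using u(1) by auto
  then have "0 < ?q u" using assms unfolding pd_def by auto
  moreover have "?q u * (norm x)^2 \<le> ?q x" for x
  proof (cases "x = 0")
    case False
    define v where "v = (1 / norm x) *\<^sub>R x"
    have "v \<in> sphere 0 1" using False by (simp add: v_def)
    have "x = norm x *\<^sub>R v" using False by (simp add: v_def)
    then have "?q x = (norm x)^2 * ?q v"
      by (metis (no_types, lifting) inner_scaleR_left inner_scaleR_right matrix_vector_mult_scaleR
          mult.assoc power2_eq_square)
    moreover have "?q u \<le> ?q v" using u(2) \<open>v \<in> sphere 0 1\<close> by blast
    ultimately show ?thesis by (metis mult.commute mult_right_mono zero_le_power2)
  qed simp
  ultimately show ?thesis using that by blast
qed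

lemma pd_entrywise_open:
  fixes S :: "real^'n^'n"
  assumes "pd S"
  obtains e where "0 < e" "\<And>M. sym_mat M \<Longrightarrow> (\<And>i j. \<bar>M$i$j - S$i$j\<bar> < e) \<Longrightarrow> pd M"
proof -
  obtain c where c: "0 < c" "\<And>x. c * (norm x)^2 \<le> x \<bullet> (S *v x)"
    using pd_quadratic_form_lower_bound[OF assms] by blast
  define e where "e = c / (2 * real CARD('n) ^ 2)"
  have "pd M" if M: "sym_mat M" "\<And>i j. \<bar>M$i$j - S$i$j\<bar> < e" for M
    unfolding pd_def
  proof (intro conjI allI impI)
    fix x :: "real^'n" assume "x \<noteq> 0"
    have "\<bar>x \<bullet> ((M - S) *v x)\<bar> \<le> real CARD('n) ^ 2 * e * (norm x)^2"
      using M(2) by (intro abs_quadratic_form_le) (simp add: less_imp_le)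
    moreover have "real CARD('n) ^ 2 * e = c / 2" by (simp add: e_def)
    ultimately have "\<bar>x \<bullet> ((M - S) *v x)\<bar> \<le> c / 2 * (norm x)^2" by simp
    moreover have "x \<bullet> (M *v x) = x \<bullet> (S *v x) + x \<bullet> ((M - S) *v x)"
      by (simp add: matrix_vector_mult_diff_rdistrib inner_diff_right)
    moreover have "0 < c / 2 * (norm x)^2" using c(1) \<open>x \<noteq> 0\<close> by simp
    ultimately show "0 < x \<bullet> (M *v x)" using c(2)[of x] by linarith
  qed (rule M(1))
  moreover have "0 < e" using c(1) by (simp add: e_def)
  ultimately show ?thesis using that by blast
qed

section \<open>Differentiability of determinant and inverse\<close>

definition cramer_inv :: "real^'n^'n \<Rightarrow> real^'n^'n" where
  "cramer_inv M = (\<chi> k j. det (\<chi> p q. if q = k then (if p = j then 1 else 0) else M$p$q) / det M)"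

lemma matrix_inv_eq_cramer_inv:
  fixes M :: "real^'n^'n"
  assumes "det M \<noteq> 0"
  shows "matrix_inv M = cramer_inv M"
proof -
  have inv: "invertible M" using assms by (simp add: invertible_det_nz)
  have "matrix_inv M $ k $ j = cramer_inv M $ k $ j" for k j
  proof -
    define y where "y = matrix_inv M *v axis j 1"
    have "M *v y = axis j 1"
      using matrix_inv_right[OF inv] by (simp add: y_def matrix_vector_mul_assoc)
    then have "y = (\<chi> k. det (\<chi> p q. if q = k then (axis j 1 :: real^'n)$p else M$p$q) / det M)"
      using cramer[OF assms] by blast
    moreover have "y $ k = matrix_inv M $ k $ j"
      by (simp add: y_def matrix_vector_mult_def axis_def if_distrib if_distribR cong: if_cong)
    moreover have "(\<chi> p q. if q = k then (axis j 1 :: real^'n)$p else M$p$q)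
        = (\<chi> p q. if q = k then (if p = j then 1 else 0) else M$p$q)"
      by (simp add: vec_eq_iff axis_def)
    ultimately show ?thesis by (simp add: cramer_inv_def)
  qed
  then show ?thesis by (simp add: vec_eq_iff)
qed

definition entrywise_differentiable :: "('a::real_normed_vector \<Rightarrow> real^'n^'m) \<Rightarrow> 'a \<Rightarrow> bool" where
  "entrywise_differentiable M x \<longleftrightarrow> (\<forall>i j. (\<lambda>y. M y $ i $ j) differentiable (at x))"

lemma differentiable_prod:
  fixes f :: "'i \<Rightarrow> 'a::real_normed_vector \<Rightarrow> real"
  assumes "\<And>i. i \<in> I \<Longrightarrow> f i differentiable (at x)"
  shows "(\<lambda>y. \<Prod>i\<in>I. f i y) differentiable (at x)"
proof -
  obtain D where "\<And>i. i \<in> I \<Longrightarrow> (f i has_derivative D i) (at x)"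
    using assms unfolding differentiable_def by metis
  then show ?thesis unfolding differentiable_def by (blast intro: has_derivative_prod)
qed

lemma differentiable_det:
  fixes M :: "'a::real_normed_vector \<Rightarrow> real^'n^'n"
  assumes "entrywise_differentiable M x"
  shows "(\<lambda>y. det (M y)) differentiable (at x)"
  using assms unfolding det_def entrywise_differentiable_def
  by (intro differentiable_sum finite_permutations finite_UNIV ballI differentiable_mult
      differentiable_const differentiable_prod) auto

lemma entrywise_differentiable_const: "entrywise_differentiable (\<lambda>y. A) x"
  by (simp add: entrywise_differentiable_def)

lemma entrywise_differentiable_add:
  "entrywise_differentiable M x \<Longrightarrow> entrywise_differentiable N x
    \<Longrightarrow> entrywise_differentiable (\<lambda>y. M y + N y) x"
  by (simp add: entrywise_differentiable_def)

lemma entrywise_differentiable_mult: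
  fixes M :: "'a::real_normed_vector \<Rightarrow> real^'n^'m" and N :: "'a \<Rightarrow> real^'k^'n"
  shows "entrywise_differentiable M x \<Longrightarrow> entrywise_differentiable N x
    \<Longrightarrow> entrywise_differentiable (\<lambda>y. M y ** N y) x"
  unfolding entrywise_differentiable_def matrix_matrix_mult_def
  by (auto intro!: differentiable_sum differentiable_mult)

lemma entrywise_differentiable_cramer_inv:
  fixes M :: "'a::real_normed_vector \<Rightarrow> real^'n^'n"
  assumes "entrywise_differentiable M x" "det (M x) \<noteq> 0"
  shows "entrywise_differentiable (\<lambda>y. cramer_inv (M y)) x"
  unfolding entrywise_differentiable_def cramer_inv_def
proof (intro allI)
  fix k j
  have "(\<lambda>y. (\<chi> p q. if q = k then (if p = j then 1 else 0) else M y $p$q :: real^'n^'n) $ p $ q)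
      differentiable (at x)" for p q
    using assms(1) by (cases "q = k") (auto simp: entrywise_differentiable_def)
  then have "entrywise_differentiable
      (\<lambda>y. (\<chi> p q. if q = k then (if p = j then 1 else 0) else M y $p$q) :: real^'n^'n) x"
    unfolding entrywise_differentiable_def by blast
  then show "(\<lambda>y. (\<chi> k j. det (\<chi> p q. if q = k then (if p = j then 1 else 0) else M y$p$q)
      / det (M y)) $ k $ j) differentiable (at x)"
    using assms by (simp add: differentiable_det differentiable_divide)
qed

lemma differentiable_eventually_nonzero:
  fixes f :: "'a::real_normed_vector \<Rightarrow> real"
  assumes "f differentiable (at x)" "f x \<noteq> 0"
  shows "eventually (\<lambda>y. f y \<noteq> 0) (at x)"
  using assms differentiable_imp_continuous_within[OF assms(1)]
  by (simp add: continuous_at tendsto_imp_eventually_ne)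

lemma entrywise_differentiable_eventually_close:
  assumes "entrywise_differentiable M x" "0 < e"
  shows "eventually (\<lambda>y. \<forall>i j. \<bar>M y $ i $ j - M x $ i $ j\<bar> < e) (at x)"
proof (intro eventually_all_finite)
  fix i j
  have "continuous (at x) (\<lambda>y. M y $ i $ j)"
    using assms(1) unfolding entrywise_differentiable_def
    by (simp add: differentiable_imp_continuous_within)
  then have "((\<lambda>y. M y $ i $ j) \<longlongrightarrow> M x $ i $ j) (at x)" by (simp add: continuous_at)
  from tendstoD[OF this assms(2)]
  show "eventually (\<lambda>y. \<bar>M y $ i $ j - M x $ i $ j\<bar> < e) (at x)"
    by (simp add: dist_real_def)
qed

section \<open>The covariance model\<close>

lemma invmat_nth:
  "invmat a c b $ i $ j = (\<Sum>l\<in>UNIV. b $ l * (a l $ i * a l $ j / (2 * c l)))"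
  unfolding invmat_def outer_def by (simp add: sum_distrib_left)

lemma sym_mat_invmat: "sym_mat (invmat a c b)"
  unfolding sym_mat_def by (simp add: vec_eq_iff transpose_def invmat_nth mult.commute)

lemma entrywise_differentiable_invmat: "entrywise_differentiable (invmat a c) b"
  unfolding entrywise_differentiable_def invmat_nth
  by (intro allI differentiable_sum finite_UNIV ballI differentiable_mult differentiable_const
      bounded_linear_imp_differentiable bounded_linear_vec_nth) auto

lemma sym_mat_Sigma_b:
  assumes "sym_mat Sp" "sym_mat Sq" "invertible (invmat a r b)" "invertible (invmat a x b)"
  shows "sym_mat (Sigma_b a r x Sp Sq Spq sn2 b)"
proof -
  define R where "R = matrix_inv (invmat a r b)"
  define X where "X = matrix_inv (invmat a x b)"
  have "transpose R = R" "transpose X = X"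
    using sym_mat_matrix_inv[OF sym_mat_invmat] assms(3,4) by (simp_all add: R_def X_def sym_mat_def)
  moreover have "transpose Sp = Sp" "transpose Sq = Sq" using assms(1,2) by (simp_all add: sym_mat_def)
  ultimately show ?thesis
    unfolding sym_mat_def Sigma_b_def Let_def R_def[symmetric] X_def[symmetric]
    by (simp add: transpose_add transpose_scalar matrix_transpose_mul matrix_mul_assoc add_ac)
qed

text \<open>\<open>matrix_inv\<close> is defined by choice, so smoothness is established for this rational
  surrogate, which agrees with \<open>Sigma_b\<close> near every point where \<open>f\<close> is defined.\<close>
definition Sigma_cramer :: "('e::finite \<Rightarrow> real^'n) \<Rightarrow> ('e \<Rightarrow> real) \<Rightarrow> ('e \<Rightarrow> real)
    \<Rightarrow> real^'n^'n \<Rightarrow> real^'n^'n \<Rightarrow> real^'n^'n \<Rightarrow> real \<Rightarrow> real^'e \<Rightarrow> real^'n^'n" where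
  "Sigma_cramer a r x Sp Sq Spq sn2 b =
     (let R = cramer_inv (invmat a r b); X = cramer_inv (invmat a x b) in
       R ** Sp ** R + X ** Sq ** X + R ** Spq ** X + X ** transpose Spq ** R
       + sn2 *\<^sub>R mat 1)"

lemma Sigma_b_eq_Sigma_cramer:
  "det (invmat a r b) \<noteq> 0 \<Longrightarrow> det (invmat a x b) \<noteq> 0
    \<Longrightarrow> Sigma_b a r x Sp Sq Spq sn2 b = Sigma_cramer a r x Sp Sq Spq sn2 b"
  by (simp add: Sigma_b_def Sigma_cramer_def matrix_inv_eq_cramer_inv)

lemma entrywise_differentiable_Sigma_cramer:
  assumes "det (invmat a r b) \<noteq> 0" "det (invmat a x b) \<noteq> 0"
  shows "entrywise_differentiable (Sigma_cramer a r x Sp Sq Spq sn2) b"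
proof -
  have "entrywise_differentiable (\<lambda>b. sn2 *\<^sub>R mat 1 :: real^'n^'n) b"
    by (rule entrywise_differentiable_const)
  then show ?thesis
    unfolding Sigma_cramer_def Let_def
    by (intro entrywise_differentiable_add entrywise_differentiable_mult
        entrywise_differentiable_const entrywise_differentiable_cramer_inv
        entrywise_differentiable_invmat assms)
qed

lemma eventually_invmat_det_nonzero:
  "det (invmat a c b) \<noteq> 0 \<Longrightarrow> eventually (\<lambda>b'. det (invmat a c b') \<noteq> 0) (at b)"
  by (rule differentiable_eventually_nonzero[OF differentiable_det[OF entrywise_differentiable_invmat]])

lemma eventually_f_defined:
  assumes "sym_mat Sp" "sym_mat Sq" and defined: "f_defined a r x Sp Sq Spq sn2 b"
  shows "eventually (\<lambda>b'. f_defined a r x Sp Sq Spq sn2 b') (at b)"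
proof -
  let ?S = "Sigma_cramer a r x Sp Sq Spq sn2"
  have dr: "det (invmat a r b) \<noteq> 0" and dx: "det (invmat a x b) \<noteq> 0"
    using defined by (simp_all add: f_defined_def invertible_det_nz)
  have "pd (?S b)" using defined Sigma_b_eq_Sigma_cramer[OF dr dx] by (simp add: f_defined_def)
  then obtain e where e: "0 < e" "\<And>M. sym_mat M \<Longrightarrow> (\<And>i j. \<bar>M$i$j - ?S b$i$j\<bar> < e) \<Longrightarrow> pd M"
    using pd_entrywise_open by blast
  have "eventually (\<lambda>b'. \<forall>i j. \<bar>?S b' $ i $ j - ?S b $ i $ j\<bar> < e) (at b)"
    by (rule entrywise_differentiable_eventually_close[OF entrywise_differentiable_Sigma_cramer[OF dr dx] e(1)])
  with eventually_invmat_det_nonzero[OF dr] eventually_invmat_det_nonzero[OF dx]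
  show ?thesis
  proof eventually_elim
    case (elim b')
    then have S_eq: "Sigma_b a r x Sp Sq Spq sn2 b' = ?S b'" by (simp add: Sigma_b_eq_Sigma_cramer)
    have "sym_mat (Sigma_b a r x Sp Sq Spq sn2 b')"
      using elim by (intro sym_mat_Sigma_b assms(1,2)) (simp_all add: invertible_det_nz)
    with S_eq have "sym_mat (?S b')" by simp
    then have "pd (?S b')" using e(2) elim by blast
    then show ?case using elim S_eq by (simp add: f_defined_def invertible_det_nz)
  qed
qed

lemma fobj_differentiable:
  assumes defined: "f_defined a r x Sp Sq Spq sn2 b"
  shows "fobj a r x Sp Sq Spq sn2 Shat differentiable (at b)"
proof -
  let ?S = "Sigma_cramer a r x Sp Sq Spq sn2"
  define g where "g b' = ln (det (?S b')) + mtrace (cramer_inv (?S b') ** Shat)" for b'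
  have dr: "det (invmat a r b) \<noteq> 0" and dx: "det (invmat a x b) \<noteq> 0"
    using defined by (simp_all add: f_defined_def invertible_det_nz)
  have S_diff: "entrywise_differentiable ?S b"
    by (rule entrywise_differentiable_Sigma_cramer[OF dr dx])
  have "pd (?S b)" using defined Sigma_b_eq_Sigma_cramer[OF dr dx] by (simp add: f_defined_def)
  then have det_pos: "0 < det (?S b)" by (rule pd_det_pos)
  have "ln differentiable (at (det (?S b)))"
    using DERIV_ln[OF det_pos] by (auto intro: differentiableI has_field_derivative_imp_has_derivative)
  then have "(\<lambda>b'. ln (det (?S b'))) differentiable (at b)"
    by (rule differentiable_compose[OF _ differentiable_det[OF S_diff]])
  moreover have "(\<lambda>b'. mtrace (cramer_inv (?S b') ** Shat)) differentiable (at b)"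
    using entrywise_differentiable_mult[OF entrywise_differentiable_cramer_inv[OF S_diff]
        entrywise_differentiable_const] det_pos
    unfolding mtrace_def entrywise_differentiable_def by (intro differentiable_sum) auto
  ultimately have "g differentiable (at b)"
    unfolding g_def by (rule differentiable_add)
  then obtain D where D: "(g has_derivative D) (at b)" unfolding differentiable_def by blast
  have "eventually (\<lambda>b'. det (?S b') \<noteq> 0) (at b)"
    using differentiable_eventually_nonzero[OF differentiable_det[OF S_diff]] det_pos by simp
  with eventually_invmat_det_nonzero[OF dr] eventually_invmat_det_nonzero[OF dx]
  have "eventually (\<lambda>b'. g b' = fobj a r x Sp Sq Spq sn2 Shat b') (at b)"
    by eventually_elim (simp add: g_def fobj_def Let_def Sigma_b_eq_Sigma_cramer matrix_inv_eq_cramer_inv)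
  moreover have "g b = fobj a r x Sp Sq Spq sn2 Shat b"
    using det_pos
    by (simp add: g_def fobj_def Let_def Sigma_b_eq_Sigma_cramer[OF dr dx] matrix_inv_eq_cramer_inv)
  ultimately show ?thesis
    using has_derivative_transform_eventually[OF D] unfolding differentiable_def by blast
qed

lemma fobj_true_point_le:
  assumes "pd (Sigma_b a r x Sp Sq Spq sn2 b0)" "pd (Sigma_b a r x Sp Sq Spq sn2 b)"
  shows "fobj a r x Sp Sq Spq sn2 (Sigma_b a r x Sp Sq Spq sn2 b0) b0
    \<le> fobj a r x Sp Sq Spq sn2 (Sigma_b a r x Sp Sq Spq sn2 b0) b"
proof -
  have "invertible (Sigma_b a r x Sp Sq Spq sn2 b0)"
    using pd_det_pos[OF assms(1)] by (simp add: invertible_det_nz)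
  then show ?thesis
    using ln_det_trace_inequality[OF assms(2,1)]
    by (simp add: fobj_def Let_def mtrace_eq_trace matrix_inv_left trace_I)
qed

theorem lemma2:
  fixes a :: "'e::finite \<Rightarrow> real^'n"
    and r x :: "'e \<Rightarrow> real"
    and Sp Sq Spq Shat :: "real^'n^'n"
    and sn2 :: real
    and L :: nat
    and bo :: "real^'e"
  assumes r_pos: "\<forall>l. 0 < r l"
    and x_pos: "\<forall>l. 0 < x l"
    and L_pos: "1 \<le> L"
    and sn2_nonneg: "0 \<le> sn2"
    and cov: "psd (block2 Sp Spq (transpose Spq) Sq)"
    and bo_bin: "\<forall>l. bo $ l \<in> {0, 1}"
    and bo_sum: "(\<Sum>l\<in>UNIV. bo $ l) = real L"
    and bo_def: "f_defined a r x Sp Sq Spq sn2 bo"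
    and Shat: "Shat = Sigma_b a r x Sp Sq Spq sn2 bo"
  shows "(fobj a r x Sp Sq Spq sn2 Shat has_derivative (\<lambda>h. 0)) (at bo)
    \<and> (\<forall>b. (\<forall>l. b $ l \<in> {0, 1}) \<and> (\<Sum>l\<in>UNIV. b $ l) = real L
            \<and> f_defined a r x Sp Sq Spq sn2 b
            \<longrightarrow> fobj a r x Sp Sq Spq sn2 Shat bo \<le> fobj a r x Sp Sq Spq sn2 Shat b)
    \<and> (\<forall>b. (\<forall>l. b $ l \<in> {0..1}) \<and> (\<Sum>l\<in>UNIV. b $ l) = real L
            \<and> f_defined a r x Sp Sq Spq sn2 b
            \<longrightarrow> fobj a r x Sp Sq Spq sn2 Shat bo \<le> fobj a r x Sp Sq Spq sn2 Shat b)"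
proof -
  let ?f = "fobj a r x Sp Sq Spq sn2 Shat"
  have pd_Shat: "pd Shat" using bo_def Shat by (simp add: f_defined_def)
  have global_min: "?f bo \<le> ?f b" if "f_defined a r x Sp Sq Spq sn2 b" for b
    using fobj_true_point_le[of a r x Sp Sq Spq sn2 bo b] pd_Shat that Shat by (simp add: f_defined_def)
  have "sym_mat Sp" "sym_mat Sq"
    using cov sym_mat_block2_diag by (auto simp: psd_def)
  from eventually_f_defined[OF this bo_def]
  have local_min: "eventually (\<lambda>b. ?f bo \<le> ?f b) (at bo)"
    by (rule eventually_mono) (rule global_min)
  obtain D where D: "(?f has_derivative D) (at bo)"
    using fobj_differentiable[OF bo_def] unfolding differentiable_def by blast
  moreover have "D = (\<lambda>h. 0)" by (rule has_derivative_local_min[OF D local_min])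
  ultimately show ?thesis using global_min by auto
qed

end
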